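(* For every real $x$ the following series representations hold (each series converging): $$\operatorname{erf}(x)=\frac{x}{\sqrt{\pi}}+\frac{x}{\sqrt{\pi}}e^{-x^2}+\frac{x^3}{\sqrt{\pi}}\sum_{k=0}^{\infty}\frac{(-1)^k(2k+1)x^{2k}}{(2k+3)(k+1)!};$$ $$\operatorname{erf}(x)=\frac{x}{\sqrt{\pi}}+\frac{x}{\sqrt{\pi}}\Big[1+\frac{x^2}{3}\Big]e^{-x^2}+\frac{x^5}{6\sqrt{\pi}}\sum_{k=0}^{\infty}\frac{(-1)^k(2k+1)(k+1)!\,x^{2k}}{(2k+5)\prod_{r=1}^{k}\Big[\sum_{i=1}^{r}(2i+1)\Big]};$$ $$\operatorname{erf}(x)=\frac{x}{\sqrt{\pi}}\Big[1-\frac{x^2}{30}\Big]+\frac{x}{\sqrt{\pi}}\Big[1+\frac{11x^2}{30}+\frac{x^4}{15}\Big]e^{-x^2}+\frac{x^7}{60\sqrt{\pi}}\sum_{k=0}^{\infty}\frac{(-1)^k(2k+1)(2k+3)(k+1)!\,x^{2k}}{3(2k+7)\prod_{r=2}^{k+1}\Big[2\sum_{i=2}^{r}i\Big]},$$ where empty products equal $1$.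
   Context: $\operatorname{erf}(x)=\frac{2}{\sqrt{\pi}}\int_0^x e^{-\lambda^2}\,d\lambda$. *)

theory Defs
  imports "HOL-Analysis.Analysis"
begin

text \<open>Error function: erf x = 2/sqrt(pi) * (oriented) integral from 0 to x of exp(-t^2).
  The interval integral LBINT t=a..b is oriented (negated when b < a).\<close>
definition erf :: "real \<Rightarrow> real" where
  "erf x = 2 / sqrt pi * (LBINT t=ereal 0..ereal x. exp (- (t\<^sup>2)))"

end

theory Submission
  imports Defs
begin

text \<open>
  Integrating the exponential series termwise, sqrt pi * erf x is the odd power series
  with coefficients 2 (-1)^n / (n! (2n+1)), and x^(2j+1) exp (-x^2) is the odd power
  series with coefficients (-1)^(n-j) / (n-j)!. In each identity, subtracting the term
  Q(x) exp (-x^2) occurring in it from sqrt pi * erf x leaves an odd power series whose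
  first m coefficients give the polynomial part and whose remaining coefficients are the
  displayed ones, once the products are evaluated as k! (k+2)! / 2 and k! (k+3)! / 6.
  The tail series converges because it is a difference of convergent series.
\<close>

definition erf_coeff :: "nat \<Rightarrow> real" where
  "erf_coeff n = 2 * (-1)^n / (fact n * (2 * real n + 1))"

definition gauss_coeff :: "nat \<Rightarrow> nat \<Rightarrow> real" where
  "gauss_coeff j n = (if j \<le> n then (-1)^(n - j) / fact (n - j) else 0)"

text \<open>sqrt pi * erf as an ordinary power series in x (with zero even coefficients),
  the form required for termwise differentiation.\<close>

definition erf_powser_coeff :: "nat \<Rightarrow> real" where
  "erf_powser_coeff m = (if odd m then erf_coeff (m div 2) else 0)"

lemma erf_powser_coeff_odd: "erf_powser_coeff (2 * n + 1) = erf_coeff n"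
  by (simp add: erf_powser_coeff_def)

lemma erf_powser_reindex:
  "(\<lambda>n. erf_coeff n * y ^ (2 * n + 1)) sums s
    \<longleftrightarrow> (\<lambda>m. erf_powser_coeff m * y ^ m) sums s"
proof -
  have "(\<lambda>n. erf_powser_coeff (2 * n + 1) * y ^ (2 * n + 1)) sums s
      \<longleftrightarrow> (\<lambda>m. erf_powser_coeff m * y ^ m) sums s"
    by (rule sums_mono_reindex) (auto simp: strict_mono_def erf_powser_coeff_def elim!: oddE)
  then show ?thesis
    by (simp only: erf_powser_coeff_odd)
qed

lemma summable_erf_powser: "summable (\<lambda>m. erf_powser_coeff m * y ^ m)"
proof -
  have "summable (\<lambda>n. erf_coeff n * y ^ (2 * n + 1))"
  proof (rule summable_comparison_test)
    show "summable (\<lambda>n. 2 * \<bar>y\<bar> * ((y\<^sup>2) ^ n /\<^sub>R fact n))"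
      by (intro summable_mult summable_exp_generic)
    show "\<exists>N. \<forall>n\<ge>N. norm (erf_coeff n * y ^ (2 * n + 1))
        \<le> 2 * \<bar>y\<bar> * ((y\<^sup>2) ^ n /\<^sub>R fact n)"
    proof (intro exI allI impI)
      fix n :: nat
      have "norm (erf_coeff n * y ^ (2 * n + 1))
          = 2 * \<bar>y\<bar> * (y\<^sup>2) ^ n / (fact n * (2 * real n + 1))"
        by (simp add: erf_coeff_def abs_mult power_abs power_mult power_add)
      also have "\<dots> \<le> 2 * \<bar>y\<bar> * (y\<^sup>2) ^ n / fact n"
        by (intro divide_left_mono) auto
      finally show "norm (erf_coeff n * y ^ (2 * n + 1))
          \<le> 2 * \<bar>y\<bar> * ((y\<^sup>2) ^ n /\<^sub>R fact n)"
        by (simp add: divide_inverse ac_simps)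
    qed
  qed
  then show ?thesis
    unfolding summable_def erf_powser_reindex .
qed

lemma diffs_erf_powser_sums:
  "(\<lambda>m. diffs erf_powser_coeff m * y ^ m) sums (2 * exp (- (y\<^sup>2)))"
proof -
  have "(\<lambda>n. 2 * ((- (y\<^sup>2)) ^ n /\<^sub>R fact n)) sums (2 * exp (- (y\<^sup>2)))"
    by (intro sums_mult exp_converges)
  moreover have "diffs erf_powser_coeff (2 * n) * y ^ (2 * n)
      = 2 * ((- (y\<^sup>2)) ^ n /\<^sub>R fact n)" for n
  proof -
    have "diffs erf_powser_coeff (2 * n) = (2 * real n + 1) * erf_coeff n"
      by (simp add: diffs_def erf_powser_coeff_def)
    also have "\<dots> = 2 * (-1) ^ n / fact n"
      by (simp add: erf_coeff_def)
    finally show ?thesis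
      by (simp add: power_mult power_minus[of "y\<^sup>2"] divide_inverse)
  qed
  ultimately have "(\<lambda>n. diffs erf_powser_coeff (2 * n) * y ^ (2 * n))
      sums (2 * exp (- (y\<^sup>2)))"
    by simp
  then show ?thesis
    by (subst (asm) sums_mono_reindex)
       (auto simp: strict_mono_def erf_powser_coeff_def diffs_def elim!: evenE)
qed

lemma sqrt_pi_erf_sums: "(\<lambda>n. erf_coeff n * x ^ (2 * n + 1)) sums (sqrt pi * erf x)"
proof -
  define E where "E y = (\<Sum>m. erf_powser_coeff m * y ^ m)" for y :: real
  have E_deriv: "(E has_real_derivative 2 * exp (- (y\<^sup>2))) (at y)" for y
    using termdiffs_strong_converges_everywhere[OF summable_erf_powser, of y]
      diffs_erf_powser_sums[of y]
    unfolding E_def by (simp add: sums_iff)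
  have "E 0 = 0"
    by (simp add: E_def erf_powser_coeff_def)
  have "(LBINT t=ereal 0..ereal x. 2 * exp (- (t\<^sup>2))) = E x - E 0"
    by (rule interval_integral_FTC_finite)
       (auto intro!: continuous_intros has_vector_derivative_at_within DERIV_subset[OF E_deriv]
         simp: has_real_derivative_iff_has_vector_derivative[symmetric])
  then have "sqrt pi * erf x = E x"
    by (simp add: erf_def \<open>E 0 = 0\<close>)
  moreover have "(\<lambda>m. erf_powser_coeff m * x ^ m) sums E x"
    unfolding E_def by (rule summable_sums[OF summable_erf_powser])
  ultimately show ?thesis
    unfolding erf_powser_reindex by simp
qed

lemma gauss_coeff_sums:
  "(\<lambda>n. gauss_coeff j n * x ^ (2 * n + 1)) sums (x ^ (2 * j + 1) * exp (- (x\<^sup>2)))"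
proof -
  have shifted: "(\<lambda>n. gauss_coeff j (n + j) * x ^ (2 * (n + j) + 1))
      = (\<lambda>n. x ^ (2 * j + 1) * ((- (x\<^sup>2)) ^ n /\<^sub>R fact n))"
  proof
    fix n
    have "x ^ (2 * (n + j) + 1) = x ^ (2 * j + 1) * (x\<^sup>2) ^ n"
      by (simp add: algebra_simps flip: power_add power_mult)
    then show "gauss_coeff j (n + j) * x ^ (2 * (n + j) + 1)
        = x ^ (2 * j + 1) * ((- (x\<^sup>2)) ^ n /\<^sub>R fact n)"
      by (simp add: gauss_coeff_def power_minus[of "x\<^sup>2"] divide_inverse)
  qed
  have "(\<lambda>n. gauss_coeff j (n + j) * x ^ (2 * (n + j) + 1))
      sums (x ^ (2 * j + 1) * exp (- (x\<^sup>2)))"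
    unfolding shifted by (intro sums_mult exp_converges)
  then show ?thesis
    by (subst (asm) sums_zero_iff_shift) (simp_all add: gauss_coeff_def)
qed

lemma odd_series_tail:
  fixes a g :: "nat \<Rightarrow> real"
  assumes sums: "(\<lambda>n. a n * x ^ (2 * n + 1)) sums s"
    and tail: "\<And>k. a (k + m) * x ^ (2 * k) = g k"
  shows "summable g \<and> s = (\<Sum>n<m. a n * x ^ (2 * n + 1)) + x ^ (2 * m + 1) * suminf g"
proof (cases "x = 0")
  case True
  have "(\<lambda>n. a n * x ^ (2 * n + 1)) sums 0"
    using True by simp
  then have "s = 0"
    using sums sums_unique2 by blast
  moreover have "g = (\<lambda>k. a (k + m) * 0 ^ k)"
  proof
    fix k
    show "g k = a (k + m) * 0 ^ k"
      using tail[of k] True by (cases k) auto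
  qed
  then have "g sums a m"
    using powser_sums_zero[of "\<lambda>k. a (k + m)"] by simp
  ultimately show ?thesis
    using True by (auto simp: sums_iff)
next
  case False
  let ?r = "s - (\<Sum>n<m. a n * x ^ (2 * n + 1))"
  have shift:
    "(\<lambda>k. a (k + m) * x ^ (2 * (k + m) + 1)) = (\<lambda>k. x ^ (2 * m + 1) * g k)"
    by (rule ext) (simp flip: tail add: algebra_simps power_add)
  have "(\<lambda>k. a (k + m) * x ^ (2 * (k + m) + 1)) sums ?r"
    using sums_split_initial_segment[OF sums] by simp
  then have "(\<lambda>k. x ^ (2 * m + 1) * g k) sums ?r"
    unfolding shift .
  then have "g sums (?r / x ^ (2 * m + 1))"
    using sums_mult_iff[of "x ^ (2 * m + 1)" g "?r / x ^ (2 * m + 1)"] False by simp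
  then show ?thesis
    using False by (auto simp: sums_iff)
qed

lemma sum_odd_numbers_from_3: "(\<Sum>i=1..r. 2 * real i + 1) = real r * (real r + 2)"
  by (induction r) (simp_all add: algebra_simps)

lemma prod_sum_odd_numbers_from_3:
  "(\<Prod>r=1..k. \<Sum>i=1..r. 2 * real i + 1) = fact k * fact (k + 2) / 2"
proof (induction k)
  case (Suc k)
  have "(\<Prod>r=1..Suc k. \<Sum>i=1..r. 2 * real i + 1)
      = (\<Prod>r=1..k. \<Sum>i=1..r. 2 * real i + 1) * (\<Sum>i=1..Suc k. 2 * real i + 1)"
    by (rule prod.cl_ivl_Suc[THEN trans]) simp
  also have "\<dots> = fact k * fact (k + 2) / 2 * ((real k + 1) * (real k + 3))"
    by (subst Suc.IH, subst sum_odd_numbers_from_3) (simp add: algebra_simps)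
  also have "\<dots> = fact (Suc k) * fact (Suc k + 2) / 2"
    by (simp only: add_Suc fact_Suc) (simp add: algebra_simps)
  finally show ?case .
qed simp

lemma twice_sum_from_2: "2 * (\<Sum>i=2..Suc r. real i) = real r * (real r + 3)"
  by (induction r) (simp_all add: algebra_simps)

lemma prod_twice_sum_from_2:
  "(\<Prod>r=2..k+1. 2 * (\<Sum>i=2..r. real i)) = fact k * fact (k + 3) / 6"
proof (induction k)
  case (Suc k)
  have "(\<Prod>r=2..Suc k + 1. 2 * (\<Sum>i=2..r. real i))
      = (\<Prod>r=2..k+1. 2 * (\<Sum>i=2..r. real i)) * (2 * (\<Sum>i=2..Suc (Suc k). real i))"
    using prod.cl_ivl_Suc[of "\<lambda>r. 2 * (\<Sum>i=2..r. real i)" 2 "k + 1"] by simp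
  also have "\<dots> = fact k * fact (k + 3) / 6 * ((real k + 1) * (real k + 4))"
    by (subst Suc.IH, subst twice_sum_from_2) (simp add: algebra_simps)
  also have "\<dots> = fact (Suc k) * fact (Suc k + 3) / 6"
    by (simp only: add_Suc fact_Suc) (simp add: algebra_simps)
  finally show ?case .
qed (simp add: eval_nat_numeral)

lemma fact_add_2: "fact (k + 2) = (real k + 2) * (real k + 1) * (fact k :: real)"
  by (simp add: eval_nat_numeral algebra_simps)

lemma fact_add_3: "fact (k + 3) = (real k + 3) * (real k + 2) * (real k + 1) * (fact k :: real)"
  by (simp add: eval_nat_numeral algebra_simps)

lemma tail_coeff_first:
  "erf_coeff (k + 1) - gauss_coeff 0 (k + 1)
    = (-1)^k * (2 * real k + 1) / ((2 * real k + 3) * fact (k + 1))"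
proof -
  have "real k + 1 \<noteq> 0" "2 * real k + 3 \<noteq> 0" by linarith+
  then show ?thesis
    by (simp add: erf_coeff_def gauss_coeff_def divide_simps) algebra
qed

lemma tail_coeff_second:
  "6 * (erf_coeff (k + 2) - gauss_coeff 0 (k + 2) - gauss_coeff 1 (k + 2) / 3)
    = (-1)^k * (2 * real k + 1) * fact (k + 1)
      / ((2 * real k + 5) * (fact k * fact (k + 2) / 2))"
proof -
  have "real k + 1 \<noteq> 0" "real k + 2 \<noteq> 0" "2 * real k + 5 \<noteq> 0" by linarith+
  then show ?thesis
    by (simp add: erf_coeff_def gauss_coeff_def fact_add_2 divide_simps) algebra
qed

lemma tail_coeff_third:
  "60 * (erf_coeff (k + 3) - gauss_coeff 0 (k + 3) - 11 / 30 * gauss_coeff 1 (k + 3)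
      - gauss_coeff 2 (k + 3) / 15)
    = (-1)^k * (2 * real k + 1) * (2 * real k + 3) * fact (k + 1)
      / (3 * (2 * real k + 7) * (fact k * fact (k + 3) / 6))"
proof -
  have "real k + 1 \<noteq> 0" "real k + 2 \<noteq> 0" "real k + 3 \<noteq> 0" "2 * real k + 7 \<noteq> 0"
    by linarith+
  then show ?thesis
    by (simp add: erf_coeff_def gauss_coeff_def fact_add_2 fact_add_3 power_add divide_simps)
      algebra
qed

lemma erf_series_first:
  fixes x :: real
  defines "g \<equiv> \<lambda>k::nat. (-1)^k * (2*k+1) * x^(2*k) / ((2*k+3) * fact (k+1))"
  shows "summable g \<and>
    erf x = x / sqrt pi + x / sqrt pi * exp (- (x\<^sup>2)) + x^3 / sqrt pi * suminf g"
proof -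
  have "(\<lambda>n. (erf_coeff n - gauss_coeff 0 n) * x ^ (2 * n + 1))
      sums (sqrt pi * erf x - x * exp (- (x\<^sup>2)))"
    using sums_diff[OF sqrt_pi_erf_sums gauss_coeff_sums[of 0]] by (simp add: left_diff_distrib)
  then have "summable g \<and> sqrt pi * erf x - x * exp (- (x\<^sup>2))
      = (\<Sum>n<1. (erf_coeff n - gauss_coeff 0 n) * x ^ (2 * n + 1))
        + x ^ (2 * 1 + 1) * suminf g"
    by (rule odd_series_tail) (unfold tail_coeff_first g_def, simp add: algebra_simps)
  then show ?thesis
    by (simp add: erf_coeff_def gauss_coeff_def eval_nat_numeral field_simps)
qed

lemma erf_series_second:
  fixes x :: real
  defines "g \<equiv> \<lambda>k::nat. (-1)^k * (2*k+1) * fact (k+1) * x^(2*k) /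
        ((2*k+5) * (\<Prod>r=1..k. \<Sum>i=1..r. (2 * real i + 1)))"
  shows "summable g \<and>
    erf x = x / sqrt pi + x / sqrt pi * (1 + x\<^sup>2 / 3) * exp (- (x\<^sup>2))
      + x^5 / (6 * sqrt pi) * suminf g"
proof -
  define a where "a n = 6 * (erf_coeff n - gauss_coeff 0 n - gauss_coeff 1 n / 3)" for n
  have "(\<lambda>n. 6 * (erf_coeff n * x ^ (2 * n + 1) - gauss_coeff 0 n * x ^ (2 * n + 1)
      - gauss_coeff 1 n * x ^ (2 * n + 1) / 3))
      sums (6 * (sqrt pi * erf x - x ^ (2 * 0 + 1) * exp (- (x\<^sup>2))
      - x ^ (2 * 1 + 1) * exp (- (x\<^sup>2)) / 3))"
    by (intro sums_mult sums_diff sums_divide sqrt_pi_erf_sums gauss_coeff_sums)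
  then have "(\<lambda>n. a n * x ^ (2 * n + 1))
      sums (6 * (sqrt pi * erf x - x * exp (- (x\<^sup>2)) - x ^ 3 * exp (- (x\<^sup>2)) / 3))"
    by (simp add: a_def eval_nat_numeral field_simps)
  then have "summable g \<and>
      6 * (sqrt pi * erf x - x * exp (- (x\<^sup>2)) - x ^ 3 * exp (- (x\<^sup>2)) / 3)
      = (\<Sum>n<2. a n * x ^ (2 * n + 1)) + x ^ (2 * 2 + 1) * suminf g"
    by (rule odd_series_tail)
      (unfold a_def tail_coeff_second g_def prod_sum_odd_numbers_from_3, simp add: algebra_simps)
  then show ?thesis
    by (simp add: a_def erf_coeff_def gauss_coeff_def eval_nat_numeral field_simps)
qed

lemma erf_series_third:
  fixes x :: real
  defines "g \<equiv> \<lambda>k::nat. (-1)^k * (2*k+1) * (2*k+3) * fact (k+1) * x^(2*k) /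
        (3 * (2*k+7) * (\<Prod>r=2..k+1. 2 * (\<Sum>i=2..r. real i)))"
  shows "summable g \<and> erf x = x / sqrt pi * (1 - x\<^sup>2 / 30)
      + x / sqrt pi * (1 + 11 * x\<^sup>2 / 30 + x^4 / 15) * exp (- (x\<^sup>2))
      + x^7 / (60 * sqrt pi) * suminf g"
proof -
  define a where
    "a n = 60 * (erf_coeff n - gauss_coeff 0 n - 11 / 30 * gauss_coeff 1 n - gauss_coeff 2 n / 15)"
    for n
  have "(\<lambda>n. 60 * (erf_coeff n * x ^ (2 * n + 1) - gauss_coeff 0 n * x ^ (2 * n + 1)
      - 11 / 30 * (gauss_coeff 1 n * x ^ (2 * n + 1)) - gauss_coeff 2 n * x ^ (2 * n + 1) / 15))
      sums (60 * (sqrt pi * erf x - x ^ (2 * 0 + 1) * exp (- (x\<^sup>2))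
      - 11 / 30 * (x ^ (2 * 1 + 1) * exp (- (x\<^sup>2)))
      - x ^ (2 * 2 + 1) * exp (- (x\<^sup>2)) / 15))"
    by (intro sums_mult sums_diff sums_divide sqrt_pi_erf_sums gauss_coeff_sums)
  then have "(\<lambda>n. a n * x ^ (2 * n + 1))
      sums (60 * (sqrt pi * erf x - x * exp (- (x\<^sup>2))
      - 11 / 30 * x ^ 3 * exp (- (x\<^sup>2)) - x ^ 5 * exp (- (x\<^sup>2)) / 15))"
    by (simp add: a_def eval_nat_numeral field_simps)
  then have "summable g \<and> 60 * (sqrt pi * erf x - x * exp (- (x\<^sup>2))
      - 11 / 30 * x ^ 3 * exp (- (x\<^sup>2)) - x ^ 5 * exp (- (x\<^sup>2)) / 15)
      = (\<Sum>n<3. a n * x ^ (2 * n + 1)) + x ^ (2 * 3 + 1) * suminf g"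
    by (rule odd_series_tail)
      (unfold a_def tail_coeff_third g_def prod_twice_sum_from_2, simp add: algebra_simps)
  then have "summable g \<and> erf x = (x * (1 - x\<^sup>2 / 30)
      + x * (1 + 11 * x\<^sup>2 / 30 + x^4 / 15) * exp (- (x\<^sup>2))
      + x^7 / 60 * suminf g) / sqrt pi"
    by (simp add: a_def erf_coeff_def gauss_coeff_def eval_nat_numeral field_simps)
  then show ?thesis
    by (simp add: add_divide_distrib)
qed

theorem theorem7p2:
  fixes x :: real
  shows
   "(summable (\<lambda>k::nat. (-1)^k * (2*k+1) * x^(2*k) / ((2*k+3) * fact (k+1))) \<and>
    erf x = x / sqrt pi + x / sqrt pi * exp (- (x\<^sup>2))
      + x^3 / sqrt pi * (\<Sum>k. (-1)^k * (2*k+1) * x^(2*k) / ((2*k+3) * fact (k+1)))) \<and>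
   (summable (\<lambda>k::nat. (-1)^k * (2*k+1) * fact (k+1) * x^(2*k) /
        ((2*k+5) * (\<Prod>r=1..k. \<Sum>i=1..r. (2 * real i + 1)))) \<and>
    erf x = x / sqrt pi + x / sqrt pi * (1 + x\<^sup>2 / 3) * exp (- (x\<^sup>2))
      + x^5 / (6 * sqrt pi) * (\<Sum>k. (-1)^k * (2*k+1) * fact (k+1) * x^(2*k) /
        ((2*k+5) * (\<Prod>r=1..k. \<Sum>i=1..r. (2 * real i + 1))))) \<and>
   (summable (\<lambda>k::nat. (-1)^k * (2*k+1) * (2*k+3) * fact (k+1) * x^(2*k) /
        (3 * (2*k+7) * (\<Prod>r=2..k+1. 2 * (\<Sum>i=2..r. real i)))) \<and>
    erf x = x / sqrt pi * (1 - x\<^sup>2 / 30)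
      + x / sqrt pi * (1 + 11 * x\<^sup>2 / 30 + x^4 / 15) * exp (- (x\<^sup>2))
      + x^7 / (60 * sqrt pi) * (\<Sum>k. (-1)^k * (2*k+1) * (2*k+3) * fact (k+1) * x^(2*k) /
        (3 * (2*k+7) * (\<Prod>r=2..k+1. 2 * (\<Sum>i=2..r. real i)))))"
  using erf_series_first[of x] erf_series_second[of x] erf_series_third[of x] by blast

end
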